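(* Let $n\ge 3$ and let $f(x)=\sum_{i=0}^n a_ix^i$ be a complex polynomial with $a_n\ne 0$, written as $f(x)=a_n(x+x_1)\cdots(x+x_n)$ with $x_1,\dots,x_n\in\mathbb{C}$. For each of the $n!$ permutations $\sigma_s$ ($s=1,\dots,n!$) of the positions $\{1,\dots,n\}$, let $x_{is}=x_{\sigma_s(i)}$ and define $b_{1s},\dots,b_{(n-1)s}$ by $x_{is}=x_{(i-1)s}+\sum_{j=1}^{i-1}b_{js}$ for $i=2,\dots,n$. Let $D_n=(n-1)!^2a_{n-1}^2-2\,n!\,(n-2)!\,a_na_{n-2}$. Then $$\frac{D_n}{a_n^2}=-\frac{1}{3}(n-1)!\sum_{s=1}^{n!}b_{1s}b_{2s};$$ and if $n\ge 4$, then for every $i=0,\dots,n-4$, $$\frac{D_n}{a_n^2}=(n-1)!\sum_{s=1}^{n!}b_{(1+i)s}b_{(3+i)s},\qquad \frac{D_n}{a_n^2}=-\frac{1}{4}(n-1)!\sum_{s=1}^{n!}b_{(2+i)s}b_{(3+i)s}.$$ Moreover, for all indices $1\le j<k\le n-1$ with $(j,k)$ not of the form $(1,2)$, $(1+i,3+i)$ or $(2+i,3+i)$ with $0\le i\le n-4$, one has $\sum_{s=1}^{n!}b_{js}b_{ks}=0$.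
   Context: The defining relations are equivalent to $b_{1s}=x_{2s}-x_{1s}$ and $b_{js}=x_{(j+1)s}-2x_{js}+x_{(j-1)s}$ for $2\le j\le n-1$. *)

theory Defs
  imports "HOL-Computational_Algebra.Polynomial" "HOL-Combinatorics.Permutations"
begin

text \<open>The numbers b_j for a sequence y_1,...,y_n (indices from 1), determined by
  y_i = y_(i-1) + sum_(j=1)^(i-1) b_j for i = 2..n; equivalently
  b_1 = y_2 - y_1 and b_j = y_(j+1) - 2 y_j + y_(j-1) for 2 <= j <= n-1.\<close>
definition bseq :: "(nat \<Rightarrow> complex) \<Rightarrow> nat \<Rightarrow> complex" where
  "bseq y j = (if j = 1 then y 2 - y 1 else y (j+1) - 2 * y j + y (j-1))"

definition Sb :: "nat \<Rightarrow> (nat \<Rightarrow> complex) \<Rightarrow> nat \<Rightarrow> nat \<Rightarrow> complex" where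
  "Sb n x j k = (\<Sum>\<sigma> | \<sigma> permutes {1..n}. bseq (x \<circ> \<sigma>) j * bseq (x \<circ> \<sigma>) k)"

definition Dn :: "nat \<Rightarrow> complex poly \<Rightarrow> complex" where
  "Dn n f = (fact (n-1))^2 * (coeff f (n-1))^2
            - 2 * fact n * fact (n-2) * coeff f n * coeff f (n-2)"

end

theory Submission
  imports Defs
begin

(* Summed over all permutations, the second moments sum_sigma x(sigma p) x(sigma q) take only two
   values: (n-1)! p2 on the diagonal and (n-2)! (e1^2 - p2) off it, where e1 = sum_i x_i and
   p2 = sum_i x_i^2. Each b_j is a linear form sum_p c_j(p) x(sigma p) whose coefficients sum to
   zero, so the off-diagonal part cancels and sum_s b_js b_ks = g <c_j, c_k> with
   g = (n-2)! (n p2 - e1^2); the inner products <c_j, c_k> are -3, 1, -4 and 0 in the four cases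
   of the theorem. On the other side, Vieta gives a_(n-1) = a_n e1 and 2 a_(n-2) = a_n (e1^2 - p2),
   whence D_n / a_n^2 = (n-1)! g. *)

definition perm_moment :: "'a set \<Rightarrow> ('a \<Rightarrow> 'b::comm_semiring_0) \<Rightarrow> 'a \<Rightarrow> 'a \<Rightarrow> 'b" where
  "perm_moment S x p q = (\<Sum>\<sigma> | \<sigma> permutes S. x (\<sigma> p) * x (\<sigma> q))"

lemma perm_moment_permutes:
  assumes "\<tau> permutes S"
  shows "perm_moment S x (\<tau> p) (\<tau> q) = perm_moment S x p q"
  unfolding perm_moment_def
  by (subst sum_permutations_compose_right[OF assms]) simp

lemma permutes_map_two_points:
  assumes "p \<in> S" "q \<in> S" "p' \<in> S" "q' \<in> S" "p \<noteq> q" "p' \<noteq> q'"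
  obtains \<tau> where "\<tau> permutes S" "\<tau> p = p'" "\<tau> q = q'"
proof
  define r where "r = transpose p p' q"
  have "r \<in> S" "r \<noteq> p'"
    using assms by (auto simp: r_def transpose_def)
  then show "transpose r q' \<circ> transpose p p' permutes S"
    using assms by (intro permutes_compose permutes_swap_id)
  show "(transpose r q' \<circ> transpose p p') p = p'" "(transpose r q' \<circ> transpose p p') q = q'"
    using assms \<open>r \<noteq> p'\<close> by (auto simp: r_def)
qed

lemma sum_permutes_reindex:
  assumes "\<sigma> permutes S"
  shows "(\<Sum>p\<in>S. g (\<sigma> p)) = (\<Sum>i\<in>S. g i)"
  using sum.permute[OF assms, of g] by simp

lemma perm_moment_diag:
  fixes x :: "'a \<Rightarrow> 'b::field_char_0"
  assumes "finite S" "p \<in> S"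
  shows "perm_moment S x p p = fact (card S - 1) * (\<Sum>i\<in>S. x i ^ 2)"
proof -
  obtain m where m: "card S = Suc m"
    using assms card_0_eq not0_implies_Suc by blast
  have "perm_moment S x p' p' = perm_moment S x p p" if "p' \<in> S" for p'
    using perm_moment_permutes[OF permutes_swap_id[OF assms(2) that], of x p p] by simp
  then have "of_nat (card S) * perm_moment S x p p = (\<Sum>p'\<in>S. perm_moment S x p' p')"
    by simp
  also have "\<dots> = (\<Sum>\<sigma> | \<sigma> permutes S. \<Sum>p'\<in>S. x (\<sigma> p') ^ 2)"
    unfolding perm_moment_def by (subst sum.swap) (simp add: power2_eq_square)
  also have "\<dots> = fact (card S) * (\<Sum>i\<in>S. x i ^ 2)"
  proof -
    have "(\<Sum>p'\<in>S. x (\<sigma> p') ^ 2) = (\<Sum>i\<in>S. x i ^ 2)" if "\<sigma> permutes S" for \<sigma>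
      using sum_permutes_reindex[OF that, of "\<lambda>i. x i ^ 2"] .
    then show ?thesis
      using card_permutations[OF refl assms(1)] by simp
  qed
  finally have "of_nat (Suc m) * perm_moment S x p p = of_nat (Suc m) * (fact m * (\<Sum>i\<in>S. x i ^ 2))"
    by (simp add: m del: of_nat_Suc)
  then show ?thesis
    by (simp add: m del: of_nat_Suc)
qed

lemma perm_moment_offdiag:
  fixes x :: "'a \<Rightarrow> 'b::field_char_0"
  assumes "finite S" "p \<in> S" "q \<in> S" "p \<noteq> q"
  shows "perm_moment S x p q = fact (card S - 2) * ((\<Sum>i\<in>S. x i) ^ 2 - (\<Sum>i\<in>S. x i ^ 2))"
proof -
  let ?d = "perm_moment S x p p" and ?o = "perm_moment S x p q"
  have "card {p, q} \<le> card S"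
    using assms by (intro card_mono) auto
  then obtain m where m: "card S = Suc (Suc m)"
    using assms(4) by (auto simp: le_iff_add)
  have diag: "perm_moment S x p' p' = ?d" if "p' \<in> S" for p'
    using assms(2) that by (simp add: perm_moment_diag[OF assms(1)])
  have offdiag: "perm_moment S x p' q' = ?o" if pq': "p' \<in> S" "q' \<in> S" "p' \<noteq> q'" for p' q'
  proof -
    obtain \<tau> where "\<tau> permutes S" "\<tau> p = p'" "\<tau> q = q'"
      using permutes_map_two_points[OF assms(2,3) pq'(1,2) assms(4) pq'(3)] .
    then show ?thesis
      using perm_moment_permutes by metis
  qed
  have row: "(\<Sum>q'\<in>S. perm_moment S x p' q') = ?d + of_nat (Suc m) * ?o" if "p' \<in> S" for p'
  proof -
    have "(\<Sum>q'\<in>S - {p'}. perm_moment S x p' q') = (\<Sum>q'\<in>S - {p'}. ?o)"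
      using that by (intro sum.cong) (auto intro: offdiag)
    then show ?thesis
      using assms(1) that m diag[OF that] by (simp add: sum.remove)
  qed
  let ?e = "\<Sum>i\<in>S. x i" and ?q = "\<Sum>i\<in>S. x i ^ 2"
  have "of_nat (Suc (Suc m)) * (?d + of_nat (Suc m) * ?o) = (\<Sum>p'\<in>S. \<Sum>q'\<in>S. perm_moment S x p' q')"
    using row m by simp
  also have "\<dots> = (\<Sum>\<sigma> | \<sigma> permutes S. (\<Sum>p'\<in>S. x (\<sigma> p')) * (\<Sum>q'\<in>S. x (\<sigma> q')))"
    unfolding perm_moment_def sum_product by (simp add: sum.swap[where B = "{\<sigma>. \<sigma> permutes S}"])
  also have "\<dots> = fact (card S) * ?e ^ 2"
  proof -
    have "(\<Sum>p'\<in>S. x (\<sigma> p')) = ?e" if "\<sigma> permutes S" for \<sigma>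
      using sum_permutes_reindex[OF that, of x] .
    then show ?thesis
      using card_permutations[OF refl assms(1)] by (simp add: power2_eq_square)
  qed
  finally have "of_nat (Suc (Suc m)) * (fact (Suc m) * ?q + of_nat (Suc m) * ?o)
      = fact (Suc (Suc m)) * ?e ^ 2"
    using perm_moment_diag[OF assms(1,2), of x] by (simp only: m diff_Suc_1)
  then have "(of_nat (Suc (Suc m)) * of_nat (Suc m)) * ?o
      = (of_nat (Suc (Suc m)) * of_nat (Suc m)) * (fact m * (?e ^ 2 - ?q))"
    unfolding fact_Suc by (simp only: algebra_simps)
  then show ?thesis
    by (simp add: m del: of_nat_Suc)
qed

(* The diagonal minus the off-diagonal value of perm_moment. *)
definition perm_moment_gap :: "'a set \<Rightarrow> ('a \<Rightarrow> 'b::field_char_0) \<Rightarrow> 'b" where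
  "perm_moment_gap S x = fact (card S - 2) * (of_nat (card S) * (\<Sum>i\<in>S. x i ^ 2) - (\<Sum>i\<in>S. x i) ^ 2)"

lemma sum_permutes_bilinear:
  fixes x :: "'a \<Rightarrow> 'b::field_char_0"
  assumes "finite S" "2 \<le> card S" "(\<Sum>p\<in>S. c p) = 0"
  shows "(\<Sum>\<sigma> | \<sigma> permutes S. (\<Sum>p\<in>S. c p * x (\<sigma> p)) * (\<Sum>q\<in>S. d q * x (\<sigma> q)))
       = perm_moment_gap S x * (\<Sum>p\<in>S. c p * d p)"
proof -
  let ?e = "\<Sum>i\<in>S. x i" and ?q = "\<Sum>i\<in>S. x i ^ 2" and ?g = "perm_moment_gap S x"
  define off where "off = fact (card S - 2) * (?e ^ 2 - ?q)"
  obtain m where m: "card S = Suc (Suc m)"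
    using assms(2) by (auto simp: le_iff_add)
  have moment: "perm_moment S x p q = off + (if p = q then ?g else 0)"
    if "p \<in> S" "q \<in> S" for p q
  proof (cases "p = q")
    case True
    then show ?thesis
      using that perm_moment_diag[OF assms(1), of p x]
      by (simp add: off_def perm_moment_gap_def m algebra_simps)
  next
    case False
    then show ?thesis
      using that perm_moment_offdiag[OF assms(1)] by (simp add: off_def)
  qed
  have row: "(\<Sum>q\<in>S. c p * d q * perm_moment S x p q)
      = off * c p * (\<Sum>q\<in>S. d q) + ?g * (c p * d p)" if "p \<in> S" for p
  proof -
    have "(\<Sum>q\<in>S. c p * d q * perm_moment S x p q)
        = (\<Sum>q\<in>S. off * c p * d q + (if q = p then ?g * (c p * d p) else 0))"
      using that by (intro sum.cong) (auto simp: moment algebra_simps)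
    also have "\<dots> = off * c p * (\<Sum>q\<in>S. d q) + ?g * (c p * d p)"
      using assms(1) that by (simp add: sum.distrib sum_distrib_left mult.assoc)
    finally show ?thesis .
  qed
  have "(\<Sum>\<sigma> | \<sigma> permutes S. (\<Sum>p\<in>S. c p * x (\<sigma> p)) * (\<Sum>q\<in>S. d q * x (\<sigma> q)))
      = (\<Sum>\<sigma> | \<sigma> permutes S. \<Sum>p\<in>S. \<Sum>q\<in>S. c p * d q * (x (\<sigma> p) * x (\<sigma> q)))"
    by (simp only: sum_product mult_ac)
  also have "\<dots> = (\<Sum>p\<in>S. \<Sum>q\<in>S. c p * d q * perm_moment S x p q)"
    unfolding perm_moment_def sum_distrib_left by (simp add: sum.swap[where A = "{\<sigma>. \<sigma> permutes S}"])
  also have "\<dots> = (\<Sum>p\<in>S. off * c p * (\<Sum>q\<in>S. d q) + ?g * (c p * d p))"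
    by (rule sum.cong[OF refl row])
  also have "\<dots> = off * (\<Sum>p\<in>S. c p) * (\<Sum>q\<in>S. d q) + ?g * (\<Sum>p\<in>S. c p * d p)"
    by (simp add: sum.distrib sum_distrib_left sum_distrib_right mult_ac)
  finally show ?thesis
    using assms(3) by simp
qed

lemma degree_prod_linear_factors:
  fixes x :: "'a \<Rightarrow> 'b::comm_ring_1"
  assumes "finite A"
  shows "degree (\<Prod>i\<in>A. [:x i, 1:]) \<le> card A"
  using assms by (intro order.trans[OF degree_prod_sum_le]) simp_all

lemma coeff_prod_linear_factors_card:
  fixes x :: "'a \<Rightarrow> 'b::comm_ring_1"
  assumes "finite A"
  shows "coeff (\<Prod>i\<in>A. [:x i, 1:]) (card A) = 1"
  using assms
proof (induction A rule: finite_induct)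
  case (insert a A)
  then show ?case
    using coeff_eq_0[OF le_imp_less_Suc[OF degree_prod_linear_factors[OF insert(1)]], of x]
    by simp
qed simp

lemma coeff_prod_linear_factors_sum:
  fixes x :: "'a \<Rightarrow> 'b::comm_ring_1"
  assumes "finite A" "card A = Suc k"
  shows "coeff (\<Prod>i\<in>A. [:x i, 1:]) k = (\<Sum>i\<in>A. x i)"
  using assms
proof (induction A arbitrary: k rule: finite_induct)
  case (insert a A)
  show ?case
  proof (cases k)
    case 0
    then have "A = {}"
      using insert by simp
    then show ?thesis
      using 0 by simp
  next
    case (Suc k')
    then show ?thesis
      using insert coeff_prod_linear_factors_card[OF insert(1), of x]
      by (simp add: add.commute)
  qed
qed simp

lemma coeff_prod_linear_factors_sum_pairs:
  fixes x :: "'a \<Rightarrow> 'b::comm_ring_1"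
  assumes "finite A" "card A = Suc (Suc k)"
  shows "2 * coeff (\<Prod>i\<in>A. [:x i, 1:]) k = (\<Sum>i\<in>A. x i) ^ 2 - (\<Sum>i\<in>A. x i ^ 2)"
  using assms
proof (induction A arbitrary: k rule: finite_induct)
  case (insert a A)
  show ?case
  proof (cases k)
    case 0
    then obtain b where "A = {b}" "b \<noteq> a"
      using insert by (auto simp: card_Suc_eq)
    then show ?thesis
      using 0 by (simp add: power2_eq_square algebra_simps)
  next
    case (Suc k')
    then show ?thesis
      using insert coeff_prod_linear_factors_sum[OF insert(1), of k x]
      by (simp add: power2_eq_square algebra_simps)
  qed
qed simp

definition bstencil :: "nat \<Rightarrow> nat \<Rightarrow> complex" where
  "bstencil j p = bseq (\<lambda>i. of_bool (i = p)) j"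

lemma bseq_eq_sum_bstencil:
  assumes "1 \<le> j" "j < n"
  shows "bseq y j = (\<Sum>p\<in>{1..n}. bstencil j p * y p)"
  using assms
  by (auto simp: bstencil_def bseq_def ring_distribs sum.distrib sum_subtractf mult.assoc
      sum_distrib_left[symmetric] Int_insert_right)

lemma sum_bstencil_eq_0:
  assumes "1 \<le> j" "j < n"
  shows "(\<Sum>p\<in>{1..n}. bstencil j p) = 0"
  using bseq_eq_sum_bstencil[OF assms, of "\<lambda>_. 1", symmetric] by (simp add: bseq_def)

lemma bseq_bstencil_first: "bseq (bstencil 1) 2 = -3"
  by (simp add: bseq_def bstencil_def)

lemma bseq_bstencil_skip: "bseq (bstencil (1 + i)) (3 + i) = 1"
  by (auto simp: bseq_def bstencil_def)

lemma bseq_bstencil_adjacent: "bseq (bstencil (2 + i)) (3 + i) = -4"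
  by (auto simp: bseq_def bstencil_def)

lemma bseq_bstencil_far: "j + 3 \<le> k \<Longrightarrow> bseq (bstencil j) k = 0"
  by (auto simp: bseq_def bstencil_def)

lemma Sb_eq_bseq_bstencil:
  assumes "1 \<le> j" "j < n" "1 \<le> k" "k < n"
  shows "Sb n x j k = perm_moment_gap {1..n} x * bseq (bstencil j) k"
proof -
  have "Sb n x j k = (\<Sum>\<sigma> | \<sigma> permutes {1..n}.
      (\<Sum>p\<in>{1..n}. bstencil j p * x (\<sigma> p)) * (\<Sum>q\<in>{1..n}. bstencil k q * x (\<sigma> q)))"
    unfolding Sb_def using assms by (simp add: bseq_eq_sum_bstencil[of _ n])
  also have "\<dots> = perm_moment_gap {1..n} x * (\<Sum>p\<in>{1..n}. bstencil j p * bstencil k p)"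
    using sum_permutes_bilinear[of "{1..n}" "bstencil j"] sum_bstencil_eq_0[OF assms(1,2)] assms by simp
  also have "(\<Sum>p\<in>{1..n}. bstencil j p * bstencil k p) = bseq (bstencil j) k"
    using bseq_eq_sum_bstencil[OF assms(3,4), of "bstencil j"] by (simp add: mult.commute)
  finally show ?thesis .
qed

lemma Dn_div_lead_coeff_sq:
  assumes "2 \<le> n" "coeff f n \<noteq> 0" "f = smult (coeff f n) (\<Prod>i\<in>{1..n}. [:x i, 1:])"
  shows "Dn n f / coeff f n ^ 2 = fact (n - 1) * perm_moment_gap {1..n} x"
proof -
  let ?a = "coeff f n" and ?e = "\<Sum>i\<in>{1..n}. x i" and ?q = "\<Sum>i\<in>{1..n}. x i ^ 2"
  obtain m where n: "n = Suc (Suc m)"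
    using assms(1) by (auto simp: le_iff_add)
  have e1: "coeff f (n - 1) = ?a * ?e"
    using coeff_prod_linear_factors_sum[of "{1..n}" "n - 1" x] n by (subst assms(3)) simp
  have e2: "2 * coeff f (n - 2) = ?a * (?e ^ 2 - ?q)"
    using coeff_prod_linear_factors_sum_pairs[of "{1..n}" "n - 2" x] n by (subst assms(3)) simp
  have "Dn n f = (fact (n - 1)) ^ 2 * (?a * ?e) ^ 2 - fact n * fact (n - 2) * ?a * (?a * (?e ^ 2 - ?q))"
    unfolding Dn_def e1 e2[symmetric] by (simp add: algebra_simps)
  also have "\<dots> = ?a ^ 2 * (fact (n - 1) * fact (n - 2) * (of_nat n * ?q - ?e ^ 2))"
    unfolding n by (simp add: fact_Suc algebra_simps power2_eq_square)
  finally show ?thesis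
    using assms(2) by (simp add: perm_moment_gap_def)
qed

theorem mainTheorem2:
  fixes f :: "complex poly" and n :: nat and x :: "nat \<Rightarrow> complex"
  assumes "n \<ge> 3"
    and "coeff f n \<noteq> 0"
    and "f = smult (coeff f n) (\<Prod>i\<in>{1..n}. [:x i, 1:])"
  shows "Dn n f / (coeff f n)^2 = - (1/3) * fact (n-1) * Sb n x 1 2
    \<and> (\<forall>i. i + 4 \<le> n \<longrightarrow>
           Dn n f / (coeff f n)^2 = fact (n-1) * Sb n x (1+i) (3+i) \<and>
           Dn n f / (coeff f n)^2 = - (1/4) * fact (n-1) * Sb n x (2+i) (3+i))
    \<and> (\<forall>j k. 1 \<le> j \<and> j < k \<and> k \<le> n - 1 \<and> (j, k) \<noteq> (1, 2) \<and>
           \<not> (\<exists>i. i + 4 \<le> n \<and> ((j, k) = (1+i, 3+i) \<or> (j, k) = (2+i, 3+i)))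
           \<longrightarrow> Sb n x j k = 0)"
proof -
  have D: "Dn n f / (coeff f n)^2 = fact (n - 1) * perm_moment_gap {1..n} x"
    using Dn_div_lead_coeff_sq[OF _ assms(2,3)] assms(1) by simp
  have Sb: "Sb n x j k = perm_moment_gap {1..n} x * bseq (bstencil j) k"
    if "1 \<le> j" "j < n" "1 \<le> k" "k < n" for j k
    using Sb_eq_bseq_bstencil[OF that] .
  show ?thesis
  proof (intro conjI allI impI)
    show "Dn n f / (coeff f n)^2 = - (1/3) * fact (n-1) * Sb n x 1 2"
      using D Sb[of 1 2] bseq_bstencil_first assms(1) by simp
  next
    fix i assume "i + 4 \<le> n"
    then show "Dn n f / (coeff f n)^2 = fact (n-1) * Sb n x (1+i) (3+i)"
      "Dn n f / (coeff f n)^2 = - (1/4) * fact (n-1) * Sb n x (2+i) (3+i)"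
      using D Sb bseq_bstencil_skip bseq_bstencil_adjacent by simp_all
  next
    fix j k
    assume jk: "1 \<le> j \<and> j < k \<and> k \<le> n - 1 \<and> (j, k) \<noteq> (1, 2) \<and>
      \<not> (\<exists>i. i + 4 \<le> n \<and> ((j, k) = (1+i, 3+i) \<or> (j, k) = (2+i, 3+i)))"
    then have "j + 3 \<le> k"
      unfolding prod.inject by presburger
    then show "Sb n x j k = 0"
      using jk Sb[of j k] bseq_bstencil_far[of j k] assms(1) by auto
  qed
qed

end
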